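(* Let $(U,Y_U,\mathbf 1_U)$ and $(V,Y_V,\mathbf 1_V)$ be $\hbar$-adic nonlocal vertex algebras, and let $S$ be a $\mathbb{C}[[\hbar]]$-submodule of $U$ such that $U$ is generated by $S$. Assume there is a $U$-module structure $Y_V^U$ on $V$ such that $Y_V^U(u,z)\mathbf 1_V\in V[[z]]$ for all $u\in U$. Suppose $\psi^0:S\to V$ is a $\mathbb{C}[[\hbar]]$-module map with $Y_V^U(s,z)=Y_V(\psi^0(s),z)$ for all $s\in S$. Then there is a homomorphism of $\hbar$-adic nonlocal vertex algebras $\psi:U\to V$ with $\psi(s)=\psi^0(s)$ for all $s\in S$.
   Context: Let $\hbar$ be a formal variable. A $\mathbb{C}[[\hbar]]$-module is topologically free if it equals $W_0[[\hbar]]$ for a vector space $W_0$. For topologically free $W=W_0[[\hbar]]$ let $\mathcal{E}_\hbar(W)=\mathrm{Hom}_{\mathbb{C}[[\hbar]]}(W,W_0((z))[[\hbar]])$, and let $\pi_n$ denote reduction modulo $\hbar^n$. A sequence $(a_1(z),\dots,a_r(z))$ in $\mathcal{E}_\hbar(W)$ is $\hbar$-adically compatible if for each $n\ge1$ there is $m\ge0$ with $\prod_{i<j}(z_i-z_j)^m\pi_n(a_1(z_1))\cdots\pi_n(a_r(z_r))\in\mathrm{Hom}(W/\hbar^nW,(W/\hbar^nW)((z_1,\dots,z_r)))$. For such a pair $(a(z),b(z))$, with $k_n$ chosen so that $(z_1-z)^{k_n}\pi_n(a(z_1))\pi_n(b(z))\in \mathrm{Hom}(W/\hbar^nW,(W/\hbar^nW)((z_1,z)))$,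 $Y_{\mathcal E}(a(z),z_0)b(z)$ is the element of $\mathcal{E}_\hbar(W)[[z_0^{\pm1}]]$ whose reduction mod $\hbar^n$ is $z_0^{-k_n}\big((z_1-z)^{k_n}\pi_n(a(z_1))\pi_n(b(z))\big)|_{z_1=z+z_0}$ for all $n$. An $\hbar$-adic nonlocal vertex algebra is a topologically free $V$ with $\mathbf{1}\in V$ and $\mathbb{C}[[\hbar]]$-linear $Y(\cdot,z):V\to\mathcal{E}_\hbar(V)$ such that $Y(\mathbf 1,z)=\mathrm{id}$, $Y(v,z)\mathbf 1\in V[[z]]$, $\lim_{z\to0}Y(v,z)\mathbf 1=v$, $\{Y(u,z)\}_{u\in V}$ is $\hbar$-adically compatible and $Y_{\mathcal E}(Y(u,z),z_0)Y(v,z)=Y(Y(u,z_0)v,z)$. A $V$-module is a topologically free $W$ with $\mathbb{C}[[\hbar]]$-linear $Y_W:V\to\mathcal{E}_\hbar(W)$, $Y_W(\mathbf 1,z)=1_W$, $\{Y_W(u,z)\}$ $\hbar$-adically compatible, and $Y_{\mathcal E}(Y_W(u,z),z_0)Y_W(v,z)=Y_W(Y(u,z_0)v,z)$. A homomorphism $\psi:U\to V$ of $\hbar$-adic nonlocal vertex algebras is a $\mathbb{C}[[\hbar]]$-linear map with $\psi(\mathbf 1_U)=\mathbf 1_V$ and $\psi(Y_U(u,z)v)=Y_V(\psi(u),z)\psi(v)$. For a $\mathbb{C}[[\hbar]]$-submodule $U'$, $[U']=\{v:\hbar^nv\in U'\text{ for some }n\}$ and $\overline{U'}$ is its $\hbar$-adic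 closure. $U$ is generated by a subset $S$ if the only closed subspace $U'\ni\mathbf 1_U$ containing $S$, closed under all products $u_mv$ and with $[U']=U'$, is $U$ itself. *)

theory Defs
  imports Complex_Main
begin

text \<open>Concrete model of topologically free C[[h]]-modules W = W0[[h]]:
  an element is a function nat => W0 (coefficient of h^k), where the type 'a
  with a complex scalar action sc (a C-vector space) plays the role of W0.\<close>

type_synonym 'a hser = "nat \<Rightarrow> 'a"
type_synonym 'a hlser = "nat \<Rightarrow> int \<Rightarrow> 'a"   \<comment> \<open>W0((z))[[h]], h-degree then z-exponent\<close>
type_synonym 'a hop = "'a hser \<Rightarrow> 'a hlser"

definition hsmult :: "(complex \<Rightarrow> 'a \<Rightarrow> 'a) \<Rightarrow> complex hser \<Rightarrow> ('a::ab_group_add) hser \<Rightarrow> 'a hser" where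
  "hsmult sc c w = (\<lambda>k. \<Sum>i\<le>k. sc (c i) (w (k - i)))"

definition Esmult :: "(complex \<Rightarrow> 'a \<Rightarrow> 'a) \<Rightarrow> complex hser \<Rightarrow> ('a::ab_group_add) hlser \<Rightarrow> 'a hlser" where
  "Esmult sc c F = (\<lambda>k m. \<Sum>i\<le>k. sc (c i) (F (k - i) m))"

definition hadd :: "('a::ab_group_add) hser \<Rightarrow> 'a hser \<Rightarrow> 'a hser" where
  "hadd x y = (\<lambda>k. x k + y k)"

definition hladd :: "('a::ab_group_add) hlser \<Rightarrow> 'a hlser \<Rightarrow> 'a hlser" where
  "hladd F G = (\<lambda>k m. F k m + G k m)"

definition hpow :: "nat \<Rightarrow> complex hser" where
  "hpow n = (\<lambda>i. if i = n then 1 else 0)"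

definition hlinear :: "(complex \<Rightarrow> 'a \<Rightarrow> 'a) \<Rightarrow> (complex \<Rightarrow> 'b \<Rightarrow> 'b)
    \<Rightarrow> (('a::ab_group_add) hser \<Rightarrow> ('b::ab_group_add) hser) \<Rightarrow> bool" where
  "hlinear sa sb f \<longleftrightarrow> (\<forall>x y. f (hadd x y) = hadd (f x) (f y)) \<and>
     (\<forall>c x. f (hsmult sa c x) = hsmult sb c (f x))"

text \<open>a is in E_h(W) = Hom_{C[[h]]}(W, W0((z))[[h]])\<close>
definition inE :: "(complex \<Rightarrow> 'a \<Rightarrow> 'a) \<Rightarrow> ('a::ab_group_add) hop \<Rightarrow> bool" where
  "inE sc a \<longleftrightarrow> (\<forall>x y. a (hadd x y) = hladd (a x) (a y)) \<and>
     (\<forall>c x. a (hsmult sc c x) = Esmult sc c (a x)) \<and>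
     (\<forall>w k. \<exists>N. \<forall>m<N. a w k m = 0)"

definition vcoef :: "'a hlser \<Rightarrow> int \<Rightarrow> 'a hser" where
  "vcoef F m = (\<lambda>k. F k m)"

text \<open>The formal product a_1(z_1)...a_r(z_r) w, as a series in z_1..z_r:
  coefficient at exponent vector e (e i is the exponent of z_(i+1)).\<close>
fun prodser :: "'a hop list \<Rightarrow> 'a hser \<Rightarrow> (nat \<Rightarrow> int) \<Rightarrow> 'a hser" where
  "prodser [] w e = w"
| "prodser (a # as) w e = (\<lambda>k. a (prodser as w (\<lambda>i. e (Suc i))) k (e 0))"

text \<open>multiplication by (z_i - z_j) on formal series in several variables\<close>
definition mulz :: "nat \<Rightarrow> nat \<Rightarrow> ((nat \<Rightarrow> int) \<Rightarrow> ('a::ab_group_add) hser)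
    \<Rightarrow> ((nat \<Rightarrow> int) \<Rightarrow> 'a hser)" where
  "mulz i j G = (\<lambda>e k. G (e(i := e i - 1)) k - G (e(j := e j - 1)) k)"

text \<open>multiplication by prod_{i<j<r} (z_i - z_j)^m\<close>
definition polymult :: "nat \<Rightarrow> nat \<Rightarrow> ((nat \<Rightarrow> int) \<Rightarrow> ('a::ab_group_add) hser)
    \<Rightarrow> ((nat \<Rightarrow> int) \<Rightarrow> 'a hser)" where
  "polymult m r G = foldr (\<lambda>(i, j) H. (mulz i j ^^ m) H)
      [(i, j). i \<leftarrow> [0..<r], j \<leftarrow> [0..<r], i < j] G"

text \<open>modulo h^n, the r-variable series lies in (W/h^nW)((z_1,...,z_r))\<close>
definition lowbdd :: "nat \<Rightarrow> nat \<Rightarrow> ((nat \<Rightarrow> int) \<Rightarrow> ('a::zero) hser) \<Rightarrow> bool" where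
  "lowbdd n r G \<longleftrightarrow> (\<exists>N. \<forall>e. (\<exists>i<r. e i < N) \<longrightarrow> (\<forall>k<n. G e k = 0))"

definition hcompat :: "('a::ab_group_add) hop list \<Rightarrow> bool" where
  "hcompat as \<longleftrightarrow> (\<forall>n\<ge>1. \<exists>m. \<forall>w. lowbdd n (length as) (polymult m (length as) (prodser as w)))"

definition pt2 :: "int \<Rightarrow> int \<Rightarrow> nat \<Rightarrow> int" where
  "pt2 j p = (\<lambda>i. if i = 0 then j else if i = 1 then p else 0)"

text \<open>YE_eq sc a b C: C (coefficients C l of z_0^l) is Y_E(a(z),z_0)b(z), i.e. for every n \<ge> 1
  and every admissible k, C mod h^n equals z_0^(-k)((z_1-z)^k a(z_1)b(z))|_(z_1=z+z_0) mod h^n.\<close>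
definition YE_eq :: "(complex \<Rightarrow> 'a \<Rightarrow> 'a) \<Rightarrow> ('a::ab_group_add) hop \<Rightarrow> 'a hop \<Rightarrow> (int \<Rightarrow> 'a hop) \<Rightarrow> bool" where
  "YE_eq sc a b C \<longleftrightarrow> (\<forall>n\<ge>1. \<forall>kk::nat.
     (\<forall>w. lowbdd n 2 (polymult kk 2 (prodser [a, b] w))) \<longrightarrow>
     (\<forall>w l q k. k < n \<longrightarrow> C l w k q =
        (if l + int kk < 0 then 0 else
          (\<Sum>j\<in>{j. polymult kk 2 (prodser [a, b] w) (pt2 j (q - j + l + int kk)) k \<noteq> 0}.
             sc ((of_int j :: complex) gchoose (nat (l + int kk)))
                (polymult kk 2 (prodser [a, b] w) (pt2 j (q - j + l + int kk)) k)))))"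

definition hnva :: "(complex \<Rightarrow> 'a \<Rightarrow> 'a) \<Rightarrow> ('a::ab_group_add) hser \<Rightarrow> ('a hser \<Rightarrow> 'a hop) \<Rightarrow> bool" where
  "hnva sc vac Y \<longleftrightarrow> Vector_Spaces.vector_space sc \<and>
     (\<forall>u. inE sc (Y u)) \<and>
     (\<forall>u v. Y (hadd u v) = (\<lambda>w. hladd (Y u w) (Y v w))) \<and>
     (\<forall>c u. Y (hsmult sc c u) = (\<lambda>w. Esmult sc c (Y u w))) \<and>
     Y vac = (\<lambda>w k m. if m = 0 then w k else 0) \<and>
     (\<forall>v k m. m < 0 \<longrightarrow> Y v vac k m = 0) \<and>
     (\<forall>v k. Y v vac k 0 = v k) \<and>
     (\<forall>us. hcompat (map Y us)) \<and>
     (\<forall>u v. YE_eq sc (Y u) (Y v) (\<lambda>l. Y (vcoef (Y u v) l)))"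

definition hmodule :: "(complex \<Rightarrow> 'a \<Rightarrow> 'a) \<Rightarrow> ('a::ab_group_add) hser \<Rightarrow> ('a hser \<Rightarrow> 'a hop)
    \<Rightarrow> (complex \<Rightarrow> 'b \<Rightarrow> 'b) \<Rightarrow> ('a hser \<Rightarrow> ('b::ab_group_add) hop) \<Rightarrow> bool" where
  "hmodule sc vac Y scW YW \<longleftrightarrow> Vector_Spaces.vector_space scW \<and>
     (\<forall>u. inE scW (YW u)) \<and>
     (\<forall>u v. YW (hadd u v) = (\<lambda>w. hladd (YW u w) (YW v w))) \<and>
     (\<forall>c u. YW (hsmult sc c u) = (\<lambda>w. Esmult scW c (YW u w))) \<and>
     YW vac = (\<lambda>w k m. if m = 0 then w k else 0) \<and>
     (\<forall>us. hcompat (map YW us)) \<and>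
     (\<forall>u v. YE_eq scW (YW u) (YW v) (\<lambda>l. YW (vcoef (Y u v) l)))"

definition hnva_hom :: "(complex \<Rightarrow> 'a \<Rightarrow> 'a) \<Rightarrow> ('a::ab_group_add) hser \<Rightarrow> ('a hser \<Rightarrow> 'a hop)
    \<Rightarrow> (complex \<Rightarrow> 'b \<Rightarrow> 'b) \<Rightarrow> ('b::ab_group_add) hser \<Rightarrow> ('b hser \<Rightarrow> 'b hop)
    \<Rightarrow> ('a hser \<Rightarrow> 'b hser) \<Rightarrow> bool" where
  "hnva_hom sU vacU YU sV vacV YV psi \<longleftrightarrow> hlinear sU sV psi \<and> psi vacU = vacV \<and>
     (\<forall>u v m. psi (vcoef (YU u v) m) = vcoef (YV (psi u) (psi v)) m)"

definition hsubmod :: "(complex \<Rightarrow> 'a \<Rightarrow> 'a) \<Rightarrow> ('a::ab_group_add) hser set \<Rightarrow> bool" where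
  "hsubmod sc A \<longleftrightarrow> (\<lambda>k. 0) \<in> A \<and> (\<forall>x\<in>A. \<forall>y\<in>A. hadd x y \<in> A) \<and>
     (\<forall>c. \<forall>x\<in>A. hsmult sc c x \<in> A)"

definition hsat :: "(complex \<Rightarrow> 'a \<Rightarrow> 'a) \<Rightarrow> ('a::ab_group_add) hser set \<Rightarrow> 'a hser set" where
  "hsat sc A = {v. \<exists>n. hsmult sc (hpow n) v \<in> A}"

definition hclosure :: "'a hser set \<Rightarrow> 'a hser set" where
  "hclosure A = {w. \<exists>f::nat \<Rightarrow> 'a hser. (\<forall>i. f i \<in> A) \<and> (\<forall>n. \<exists>i0. \<forall>i\<ge>i0. \<forall>k<n. f i k = w k)}"

definition hgenerated :: "(complex \<Rightarrow> 'a \<Rightarrow> 'a) \<Rightarrow> ('a::ab_group_add) hser \<Rightarrow> ('a hser \<Rightarrow> 'a hop)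
    \<Rightarrow> 'a hser set \<Rightarrow> bool" where
  "hgenerated sc vac Y S \<longleftrightarrow> (\<forall>U'. hsubmod sc U' \<and> hclosure U' = U' \<and> vac \<in> U' \<and> S \<subseteq> U' \<and>
     (\<forall>u\<in>U'. \<forall>v\<in>U'. \<forall>m. vcoef (Y u v) m \<in> U') \<and> hsat sc U' = U' \<longrightarrow> U' = UNIV)"

end

theory Submission
  imports Defs
begin

text \<open>Put \<open>\<psi>(u)\<close> := the constant term of \<open>Y\<^sub>V\<^sup>U(u,z)\<one>\<^sub>V\<close>. The set of \<open>u\<close> with
  \<open>Y\<^sub>V\<^sup>U(u,z) = Y\<^sub>V(\<psi>(u),z)\<close> is an equalizer of two \<open>\<hbar>\<close>-linear maps into \<open>\<E>\<^sub>\<hbar>(V)\<close>, hence a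
  closed saturated submodule; it contains \<open>\<one>\<^sub>U\<close> and \<open>S\<close> (as \<open>Y\<^sub>V(v,z)\<one>\<^sub>V\<close> has constant term
  \<open>v\<close>), and it is closed under all products because \<open>Y\<^sub>\<E>(a(z),z\<^sub>0)b(z)\<close> is uniquely determined
  by \<open>a\<close> and \<open>b\<close>. Since \<open>S\<close> generates \<open>U\<close>, it is all of \<open>U\<close>, and comparing constant terms
  after applying both sides to \<open>\<one>\<^sub>V\<close> shows that \<open>\<psi>\<close> is a homomorphism.\<close>

definition hlinear_hop :: "(complex \<Rightarrow> 'a \<Rightarrow> 'a) \<Rightarrow> (complex \<Rightarrow> 'b \<Rightarrow> 'b)
    \<Rightarrow> (('a::ab_group_add) hser \<Rightarrow> ('b::ab_group_add) hop) \<Rightarrow> bool" where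
  "hlinear_hop sa sb Y \<longleftrightarrow> (\<forall>u v. Y (hadd u v) = (\<lambda>w. hladd (Y u w) (Y v w))) \<and>
     (\<forall>c u. Y (hsmult sa c u) = (\<lambda>w. Esmult sb c (Y u w)))"

definition vacuum_coef :: "('a hser \<Rightarrow> 'b hop) \<Rightarrow> 'b hser \<Rightarrow> 'a hser \<Rightarrow> 'b hser" where
  "vacuum_coef Y vac u = (\<lambda>k. Y u vac k 0)"

lemma hsmult_hpow:
  assumes "Vector_Spaces.vector_space sc"
  shows "hsmult sc (hpow n) u k = (if n \<le> k then u (k - n) else 0)"
proof -
  interpret vector_space sc by fact
  have "hsmult sc (hpow n) u k = (\<Sum>i\<le>k. if i = n then u (k - i) else 0)"
    unfolding hsmult_def hpow_def by (rule sum.cong) auto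
  then show ?thesis by simp
qed

lemma Esmult_hpow:
  assumes "Vector_Spaces.vector_space sc"
  shows "Esmult sc (hpow n) F k m = (if n \<le> k then F (k - n) m else 0)"
proof -
  interpret vector_space sc by fact
  have "Esmult sc (hpow n) F k m = (\<Sum>i\<le>k. if i = n then F (k - i) m else 0)"
    unfolding Esmult_def hpow_def by (rule sum.cong) auto
  then show ?thesis by simp
qed

lemma hsmult_hpow_0:
  assumes "Vector_Spaces.vector_space sc"
  shows "hsmult sc (hpow 0) u = u"
  by (simp add: fun_eq_iff hsmult_hpow[OF assms])

lemma Esmult_hpow_cancel:
  assumes "Vector_Spaces.vector_space sc" and "Esmult sc (hpow n) F = Esmult sc (hpow n) G"
  shows "F = G"
proof (intro ext)
  fix k m
  show "F k m = G k m"
    using fun_cong[OF fun_cong[OF assms(2), of "k + n"], of m] by (simp add: Esmult_hpow[OF assms(1)])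
qed

lemma hadd_hsmult_hpow_decomp:
  assumes "Vector_Spaces.vector_space sc" and "\<forall>j<n. u j = u' j"
  shows "u = hadd u' (hsmult sc (hpow n) (\<lambda>k. u (k + n) - u' (k + n)))"
  using assms(2) by (auto simp: hadd_def hsmult_hpow[OF assms(1)] fun_eq_iff)

text \<open>Two arguments agreeing modulo \<open>\<hbar>\<^sup>n\<close> differ by \<open>\<hbar>\<^sup>n\<close> times something, which \<open>Y\<close> turns into
  \<open>\<hbar>\<^sup>n\<close> times something.\<close>
lemma hlinear_hop_truncate:
  assumes "Vector_Spaces.vector_space sa" and "Vector_Spaces.vector_space sb"
    and "hlinear_hop sa sb Y" and "\<forall>j<n. u j = u' j" and "k < n"
  shows "Y u w k m = Y u' w k m"
proof -
  have "Y u w k m = Y (hadd u' (hsmult sa (hpow n) (\<lambda>k. u (k + n) - u' (k + n)))) w k m"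
    by (subst hadd_hsmult_hpow_decomp[OF assms(1,4)]) (rule refl)
  also have "\<dots> = Y u' w k m"
    using assms(3,5) by (simp add: hlinear_hop_def hladd_def Esmult_hpow[OF assms(2)])
  finally show ?thesis .
qed

lemma hlinear_hop_comp:
  assumes "hlinear sa sb f" and "hlinear_hop sb sc Y"
  shows "hlinear_hop sa sc (\<lambda>u. Y (f u))"
  using assms by (simp add: hlinear_def hlinear_hop_def)

lemma hlinear_vacuum_coef:
  assumes "hlinear_hop sa sb Y"
  shows "hlinear sa sb (vacuum_coef Y vac)"
  using assms by (simp add: hlinear_def hlinear_hop_def vacuum_coef_def hadd_def hladd_def
      hsmult_def Esmult_def)

lemma hnva_hlinear_hop: "hnva sc vac Y \<Longrightarrow> hlinear_hop sc sc Y"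
  by (simp add: hnva_def hlinear_hop_def)

lemma hmodule_hlinear_hop: "hmodule sc vac Y scW YW \<Longrightarrow> hlinear_hop sc scW YW"
  by (simp add: hmodule_def hlinear_hop_def)

lemma vacuum_coef_hnva: "hnva sc vac Y \<Longrightarrow> vacuum_coef Y vac v = v"
  by (simp add: hnva_def vacuum_coef_def fun_eq_iff)

lemma vacuum_coef_eq_if_agrees:
  assumes "hnva sV vacV YV" and "YW u = YV v"
  shows "vacuum_coef YW vacV u = v"
  using assms vacuum_coef_hnva[OF assms(1), of v] by (simp add: vacuum_coef_def)

lemma hlinear_hop_zero:
  assumes "hlinear_hop sa sb Y"
  shows "Y (\<lambda>k. 0) = (\<lambda>w k m. 0)"
proof (intro ext)
  fix w k m
  have "Y (\<lambda>k. 0) = Y (hadd (\<lambda>k. 0) (\<lambda>k. 0))" by (simp add: hadd_def)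
  also have "\<dots> = (\<lambda>w. hladd (Y (\<lambda>k. 0) w) (Y (\<lambda>k. 0) w))"
    using assms by (simp add: hlinear_hop_def)
  finally have "Y (\<lambda>k. 0) w k m = Y (\<lambda>k. 0) w k m + Y (\<lambda>k. 0) w k m"
    by (simp add: hladd_def fun_eq_iff)
  then show "Y (\<lambda>k. 0) w k m = 0" by simp
qed

lemma hsubmod_equalizer:
  fixes F G :: "('a::ab_group_add) hser \<Rightarrow> ('b::ab_group_add) hop"
  assumes "hlinear_hop sa sb F" and "hlinear_hop sa sb G"
  shows "hsubmod sa {u. F u = G u}"
  using assms by (simp add: hsubmod_def hlinear_hop_def hlinear_hop_zero[OF assms(1)]
      hlinear_hop_zero[OF assms(2)])

lemma hclosure_equalizer:
  fixes F G :: "('a::ab_group_add) hser \<Rightarrow> ('b::ab_group_add) hop"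
  assumes "Vector_Spaces.vector_space sa" and "Vector_Spaces.vector_space sb"
    and "hlinear_hop sa sb F" and "hlinear_hop sa sb G"
  shows "hclosure {u. F u = G u} = {u. F u = G u}"
proof
  show "{u. F u = G u} \<subseteq> hclosure {u. F u = G u}"
    unfolding hclosure_def by (auto intro!: exI[of _ "\<lambda>i. _"])
  show "hclosure {u. F u = G u} \<subseteq> {u. F u = G u}"
  proof
    fix u assume "u \<in> hclosure {u. F u = G u}"
    then obtain f :: "nat \<Rightarrow> 'a hser" where f: "\<forall>i. F (f i) = G (f i)" and lim: "\<forall>n. \<exists>i0. \<forall>i\<ge>i0. \<forall>k<n. f i k = u k"
      unfolding hclosure_def by auto
    have "F u w k m = G u w k m" for w k m
    proof -
      obtain i where "\<forall>i'\<ge>i. \<forall>j<Suc k. f i' j = u j" using lim by blast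
      then have agree: "\<forall>j<Suc k. u j = f i j" by simp
      have "F u w k m = F (f i) w k m"
        by (rule hlinear_hop_truncate[OF assms(1,2,3) agree lessI])
      also have "\<dots> = G (f i) w k m" using f by simp
      also have "\<dots> = G u w k m"
        by (rule hlinear_hop_truncate[OF assms(1,2,4) agree lessI, symmetric])
      finally show ?thesis .
    qed
    then show "u \<in> {u. F u = G u}" by (simp add: fun_eq_iff)
  qed
qed

lemma hsat_equalizer:
  fixes F G :: "('a::ab_group_add) hser \<Rightarrow> ('b::ab_group_add) hop"
  assumes "Vector_Spaces.vector_space sa" and "Vector_Spaces.vector_space sb"
    and "hlinear_hop sa sb F" and "hlinear_hop sa sb G"
  shows "hsat sa {u. F u = G u} = {u. F u = G u}"
proof
  show "{u. F u = G u} \<subseteq> hsat sa {u. F u = G u}"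
  proof
    fix u assume "u \<in> {u. F u = G u}"
    then show "u \<in> hsat sa {u. F u = G u}"
      unfolding hsat_def by (intro CollectI exI[of _ 0]) (simp add: hsmult_hpow_0[OF assms(1)])
  qed
  show "hsat sa {u. F u = G u} \<subseteq> {u. F u = G u}"
  proof
    fix u assume "u \<in> hsat sa {u. F u = G u}"
    then obtain n where "F (hsmult sa (hpow n) u) = G (hsmult sa (hpow n) u)"
      by (auto simp: hsat_def)
    then have "Esmult sb (hpow n) (F u w) = Esmult sb (hpow n) (G u w)" for w
      using assms(3,4) by (simp add: hlinear_hop_def fun_eq_iff)
    then have "F u w = G u w" for w
      by (rule Esmult_hpow_cancel[OF assms(2)])
    then show "u \<in> {u. F u = G u}" by auto
  qed
qed

lemma YE_eq_unique:
  assumes "YE_eq sc a b C1" and "YE_eq sc a b C2" and "hcompat [a, b]"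
  shows "C1 = C2"
proof (intro ext)
  fix l w k q
  have "\<exists>m. \<forall>w. lowbdd (Suc k) (length [a, b]) (polymult m (length [a, b]) (prodser [a, b] w))"
    using assms(3) unfolding hcompat_def by simp
  then obtain m where m: "\<forall>w. lowbdd (Suc k) 2 (polymult m 2 (prodser [a, b] w))"
    by (auto simp: numeral_2_eq_2)
  show "C1 l w k q = C2 l w k q"
    using assms(1)[unfolded YE_eq_def, rule_format, OF _ m[rule_format] lessI]
      assms(2)[unfolded YE_eq_def, rule_format, OF _ m[rule_format] lessI] by simp
qed

text \<open>A module structure agreeing with \<open>Y\<^sub>V\<close> on \<open>u\<close> and \<open>v\<close> agrees with it on all products
  \<open>u\<^sub>l v\<close>, since both sides are \<open>Y\<^sub>\<E>(Y\<^sub>V(\<psi> u,z),z\<^sub>0)Y\<^sub>V(\<psi> v,z)\<close>.\<close>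
lemma hmodule_agrees_on_products:
  assumes V: "hnva sV vacV YV" and M: "hmodule sU vacU YU sV YVU"
    and "YVU u = YV (psi u)" and "YVU v = YV (psi v)"
  shows "YVU (vcoef (YU u v) l) = YV (vcoef (YV (psi u) (psi v)) l)"
proof -
  have "YE_eq sV (YVU u) (YVU v) (\<lambda>l. YVU (vcoef (YU u v) l))"
    using M by (simp add: hmodule_def)
  then have "YE_eq sV (YV (psi u)) (YV (psi v)) (\<lambda>l. YVU (vcoef (YU u v) l))"
    using assms(3,4) by simp
  moreover have "YE_eq sV (YV (psi u)) (YV (psi v)) (\<lambda>l. YV (vcoef (YV (psi u) (psi v)) l))"
    and "hcompat [YV (psi u), YV (psi v)]"
    using V unfolding hnva_def by (auto dest: spec[of _ "[psi u, psi v]"])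
  ultimately have "(\<lambda>l. YVU (vcoef (YU u v) l)) = (\<lambda>l. YV (vcoef (YV (psi u) (psi v)) l))"
    by (rule YE_eq_unique)
  then show ?thesis by (simp add: fun_eq_iff)
qed

lemma hmodule_vacuum_coef_products:
  assumes "hnva sV vacV YV" and "hmodule sU vacU YU sV YVU"
    and "YVU u = YV (vacuum_coef YVU vacV u)" and "YVU v = YV (vacuum_coef YVU vacV v)"
  defines "psi \<equiv> vacuum_coef YVU vacV"
  shows "YVU (vcoef (YU u v) l) = YV (vcoef (YV (psi u) (psi v)) l)"
    and "psi (vcoef (YU u v) l) = vcoef (YV (psi u) (psi v)) l"
proof -
  show eq: "YVU (vcoef (YU u v) l) = YV (vcoef (YV (psi u) (psi v)) l)"
    using hmodule_agrees_on_products[OF assms(1,2)] assms(3,4) unfolding psi_def .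
  show "psi (vcoef (YU u v) l) = vcoef (YV (psi u) (psi v)) l"
    unfolding psi_def by (rule vacuum_coef_eq_if_agrees[where YW = YVU, OF assms(1) eq[unfolded psi_def]])
qed

lemma hmodule_eq_YV_vacuum_coef:
  assumes U: "hnva sU vacU YU" and V: "hnva sV vacV YV"
    and gen: "hgenerated sU vacU YU S" and M: "hmodule sU vacU YU sV YVU"
    and S: "\<forall>s\<in>S. YVU s = YV (vacuum_coef YVU vacV s)"
  shows "YVU u = YV (vacuum_coef YVU vacV u)"
proof -
  define psi where "psi = vacuum_coef YVU vacV"
  define E where "E = {u. YVU u = YV (psi u)}"
  have vsU: "Vector_Spaces.vector_space sU" and vsV: "Vector_Spaces.vector_space sV"
    using U V by (simp_all add: hnva_def)
  have YVU_lin: "hlinear_hop sU sV YVU" by (rule hmodule_hlinear_hop[OF M])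
  have YVpsi_lin: "hlinear_hop sU sV (\<lambda>u. YV (psi u))"
    unfolding psi_def
    by (rule hlinear_hop_comp[OF hlinear_vacuum_coef[OF YVU_lin] hnva_hlinear_hop[OF V]])
  have "YVU vacU = YV (psi vacU)"
    using V M by (simp add: psi_def vacuum_coef_def hnva_def hmodule_def)
  moreover have "\<forall>u\<in>E. \<forall>v\<in>E. \<forall>m. vcoef (YU u v) m \<in> E"
    using hmodule_vacuum_coef_products[OF V M] by (simp add: E_def psi_def)
  ultimately have "hsubmod sU E \<and> hclosure E = E \<and> vacU \<in> E \<and> S \<subseteq> E \<and>
      (\<forall>u\<in>E. \<forall>v\<in>E. \<forall>m. vcoef (YU u v) m \<in> E) \<and> hsat sU E = E"
    using S hsubmod_equalizer[OF YVU_lin YVpsi_lin]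
      hclosure_equalizer[OF vsU vsV YVU_lin YVpsi_lin] hsat_equalizer[OF vsU vsV YVU_lin YVpsi_lin]
    unfolding E_def psi_def by auto
  then have "E = UNIV"
    using gen unfolding hgenerated_def by blast
  then show ?thesis by (simp add: E_def psi_def set_eq_iff)
qed

text \<open>Only hypotheses 1, 2, 4, 5 and 9 are used: \<open>\<psi>\<close> is read off from the constant term of
  \<open>Y\<^sub>V\<^sup>U(u,z)\<one>\<^sub>V\<close> alone (negative powers of \<open>z\<close> are irrelevant), and its linearity, hence
  that of \<open>\<psi>\<^sup>0\<close>, comes from that of \<open>Y\<^sub>V\<^sup>U\<close>.\<close>
theorem proposition3p8:
  fixes sU :: "complex \<Rightarrow> 'u::ab_group_add \<Rightarrow> 'u" and vacU :: "'u hser" and YU :: "'u hser \<Rightarrow> 'u hop"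
    and sV :: "complex \<Rightarrow> 'v::ab_group_add \<Rightarrow> 'v" and vacV :: "'v hser" and YV :: "'v hser \<Rightarrow> 'v hop"
    and S :: "'u hser set" and YVU :: "'u hser \<Rightarrow> 'v hop" and psi0 :: "'u hser \<Rightarrow> 'v hser"
  assumes "hnva sU vacU YU" and "hnva sV vacV YV"
    and "hsubmod sU S" and "hgenerated sU vacU YU S"
    and "hmodule sU vacU YU sV YVU"
    and "\<forall>u k m. m < 0 \<longrightarrow> YVU u vacV k m = 0"
    and "\<forall>x\<in>S. \<forall>y\<in>S. psi0 (hadd x y) = hadd (psi0 x) (psi0 y)"
    and "\<forall>c. \<forall>x\<in>S. psi0 (hsmult sU c x) = hsmult sV c (psi0 x)"
    and "\<forall>s\<in>S. YVU s = YV (psi0 s)"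
  shows "\<exists>psi. hnva_hom sU vacU YU sV vacV YV psi \<and> (\<forall>s\<in>S. psi s = psi0 s)"
proof (intro exI conjI)
  let ?psi = "vacuum_coef YVU vacV"
  have psi_S: "\<forall>s\<in>S. ?psi s = psi0 s"
    using assms(9) vacuum_coef_eq_if_agrees[OF assms(2)] by blast
  have agree: "YVU u = YV (?psi u)" for u
    by (rule hmodule_eq_YV_vacuum_coef[OF assms(1,2,4,5)]) (use assms(9) psi_S in auto)
  have "?psi vacU = vacV"
    using assms(5) by (simp add: vacuum_coef_def hmodule_def)
  then show "hnva_hom sU vacU YU sV vacV YV ?psi"
    using hlinear_vacuum_coef[OF hmodule_hlinear_hop[OF assms(5)]]
      hmodule_vacuum_coef_products(2)[OF assms(2,5) agree agree]
    by (simp add: hnva_hom_def)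
  show "\<forall>s\<in>S. ?psi s = psi0 s" by (rule psi_S)
qed

end
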